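(* For $\lambda>0$ let $\tilde P_1(\lambda)$ be a random variable on $(0,1)$ with density $$\frac{\lambda}{\sqrt{2\pi}}\,p^{-1/2}(1-p)^{-3/2}\exp\Big(-\frac{\lambda^2}{2}\frac{p}{1-p}\Big),\quad 0<p<1,$$ and let $\mu(q\,\|\,\lambda)=\mathbb E[\tilde P_1(\lambda)^q]$. Then for each $\lambda>0$ and $q>-\tfrac12$, $$\mu(q\,\|\,\lambda)=\mathbb E\Big[\Big(\frac{B_1^2}{\lambda^2+B_1^2}\Big)^q\Big]=\mathbb E(|B_1|^{2q})\,h_{-2q}(\lambda),$$ where $B_1$ is standard Gaussian, $\mathbb E(|B_1|^{2q})=2^q\Gamma(q+\tfrac12)/\Gamma(\tfrac12)$, and $h_{-2q}$ is the Hermite function. Moreover, for $q>0$, $$\mu(q\,\|\,\lambda)=\mathbb E\big[\exp(-\lambda\sqrt{2\Gamma_q})\big],$$ where $\Gamma_q$ has the gamma density $\Gamma(q)^{-1}t^{q-1}e^{-t}$ on $t>0$.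
   Context: The density above is the structural density (law of the frequency of the class containing 1) of the random partition generated by uniform sampling from the excursion intervals of a standard Brownian motion on $[0,1]$ conditioned on its local time at $0$ up to time $1$ being $\lambda$. Hermite function: $h_0(\lambda)=1$, and for $q\notin\{0,1,2,\dots\}$, $$h_{-2q}(\lambda)=\frac{1}{2\Gamma(2q)}\sum_{j=0}^\infty\Gamma\big(q+\tfrac j2\big)2^{q+j/2}\frac{(-\lambda)^j}{j!}.$$ *)

theory Defs
  imports "HOL-Probability.Probability"
begin

definition P1_density :: "real \<Rightarrow> real \<Rightarrow> real" where
  "P1_density lam p =
     lam / sqrt (2 * pi) * p powr (-1/2) * (1 - p) powr (-3/2)
       * exp (- (lam^2 / 2) * (p / (1 - p)))"

definition mu_moment :: "real \<Rightarrow> real \<Rightarrow> real" where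
  "mu_moment q lam = (LINT p:{0<..<1}|lborel. p powr q * P1_density lam p)"

definition hermite_fun :: "real \<Rightarrow> real \<Rightarrow> real" where
  "hermite_fun nu lam =
     (if nu = 0 then 1
      else (let q = - nu / 2 in
        1 / (2 * Gamma (2 * q)) *
        (\<Sum>j. Gamma (q + real j / 2) * 2 powr (q + real j / 2) * (- lam) ^ j / fact j)))"

end

theory Submission
  imports Defs
begin

text \<open>
  The substitution \<open>p = x\<^sup>2 / (lam\<^sup>2 + x\<^sup>2)\<close> maps \<open>(0, \<infinity>)\<close> onto \<open>(0, 1)\<close> and turns the density of
  \<open>P1~(lam)\<close> into twice the standard normal density, so the moment is
  \<open>E[(B\<^sup>2 / (lam\<^sup>2 + B\<^sup>2)) powr q]\<close>. Writing \<open>Gamma (q + 1) * (1 + lam\<^sup>2 / x\<^sup>2) powr (- q)\<close> as a gamma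
  integral in \<open>t\<close> and integrating over \<open>x\<close> first, one meets the Gaussian kernel
  \<open>E[(1 + lam\<^sup>2 / B\<^sup>2) exp (- t lam\<^sup>2 / B\<^sup>2)] = exp (- lam sqrt (2t)) (1 + lam / sqrt (2t))\<close>, computed by
  the substitutions \<open>x \<mapsto> \<beta> / x\<close> and \<open>x \<mapsto> x - \<beta> / x\<close>. Hence \<open>Gamma (q + 1)\<close> times the moment is
  \<open>J (q + 1) + lam / sqrt 2 * J (q + 1/2)\<close>, where \<open>J s = \<integral>\<^sub>0\<^sup>\<infinity> t\<^sup>s\<^sup>-\<^sup>1 exp (- t - lam sqrt (2t)) dt\<close>.
  Expanding \<open>exp (- lam sqrt (2t))\<close> in powers of \<open>sqrt t\<close> and integrating termwise gives
  \<open>J s = \<Sum>\<^sub>j Gamma (s + j/2) c\<^sub>j\<close>; the two series telescope to \<open>q \<Sum>\<^sub>j Gamma (q + j/2) c\<^sub>j\<close>, which is the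
  Hermite series, and Legendre's duplication formula matches the constants with \<open>E |B|\<^sup>2\<^sup>q\<close>.
  For \<open>q > 0\<close> the same series is \<open>J q\<close>, which is the gamma mixture representation.
\<close>

section \<open>Integration on the real line\<close>

lemma powr_minus_half: "y > 0 \<Longrightarrow> y powr (-1/2) = 1 / sqrt y"
  for y :: real
  by (simp add: powr_minus_divide powr_half_sqrt)

lemma powr_minus_three_halves: "y > 0 \<Longrightarrow> y powr (-3/2) = 1 / (y * sqrt y)"
  for y :: real
  using powr_add[of y 1 "1/2"] by (simp add: powr_minus_divide powr_half_sqrt)

lemma ennreal_eq_divide_if_mult_eq:
  fixes c x :: real and N :: ennreal
  assumes "c > 0" and "ennreal c * N = ennreal x"
  shows "N = ennreal (x / c)"
proof -
  have "ennreal (x / c) = ennreal (1 / c) * ennreal x"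
    using assms(1) by (simp add: ennreal_mult'[symmetric])
  also have "\<dots> = ennreal (1 / c) * ennreal c * N"
    by (simp only: assms(2)[symmetric] mult.assoc)
  also have "ennreal (1 / c) * ennreal c = 1"
    using assms(1) by (simp add: ennreal_mult'[symmetric])
  finally show ?thesis by simp
qed

lemma nn_integral_gamma_kernel:
  fixes s b :: real
  assumes s: "s > 0" and b: "b > 0"
  shows "(\<integral>\<^sup>+t. ennreal (t powr (s - 1) * exp (- (b * t))) * indicator {0<..} t \<partial>lborel)
       = ennreal (b powr (- s) * Gamma s)"
proof -
  define G where "G = (\<lambda>x::real. ennreal (x powr (s - 1) / exp x) * indicator {0<..} x)"
  have "(\<integral>\<^sup>+x. ennreal (x powr (s - 1) / exp x) * indicator {0..} x \<partial>lborel) = ennreal (Gamma s)"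
    by (rule nn_integral_has_integral_lebesgue'[OF _ Gamma_integral_real[OF s]]) auto
  moreover have "(\<lambda>x. ennreal (x powr (s - 1) / exp x) * indicator {0..} x) = G"
    by (auto simp: G_def indicator_def fun_eq_iff)
  ultimately have "ennreal (Gamma s) = (\<integral>\<^sup>+x. G x \<partial>lborel)" by simp
  also have "\<dots> = ennreal b * (\<integral>\<^sup>+x. G (0 + b * x) \<partial>lborel)"
    using b nn_integral_real_affine[of G b 0] by (simp add: G_def)
  also have "(\<lambda>x. G (0 + b * x)) = (\<lambda>x. ennreal (b powr (s - 1)) *
      (ennreal (x powr (s - 1) * exp (- (b * x))) * indicator {0<..} x))"
  proof
    fix x :: real
    show "G (0 + b * x) = ennreal (b powr (s - 1)) *
        (ennreal (x powr (s - 1) * exp (- (b * x))) * indicator {0<..} x)"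
    proof (cases "x > 0")
      case True
      then have "(b * x) powr (s - 1) / exp (b * x) = b powr (s - 1) * (x powr (s - 1) * exp (- (b * x)))"
        using b by (simp add: powr_mult exp_minus field_simps)
      with True b show ?thesis by (simp add: G_def ennreal_mult')
    qed (use b in \<open>simp add: G_def indicator_def zero_less_mult_iff\<close>)
  qed
  also have "(\<integral>\<^sup>+x. ennreal (b powr (s - 1)) * (ennreal (x powr (s - 1) * exp (- (b * x))) * indicator {0<..} x) \<partial>lborel)
      = ennreal (b powr (s - 1)) * (\<integral>\<^sup>+t. ennreal (t powr (s - 1) * exp (- (b * t))) * indicator {0<..} t \<partial>lborel)"
    by (rule nn_integral_cmult) auto
  finally have "ennreal (Gamma s) = ennreal (b powr s) *
      (\<integral>\<^sup>+t. ennreal (t powr (s - 1) * exp (- (b * t))) * indicator {0<..} t \<partial>lborel)"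
    using b by (simp add: ennreal_mult'[symmetric] mult.assoc[symmetric] powr_diff)
  then have "ennreal (b powr (- s)) * ennreal (Gamma s) =
      (\<integral>\<^sup>+t. ennreal (t powr (s - 1) * exp (- (b * t))) * indicator {0<..} t \<partial>lborel)"
    using b by (simp add: mult.assoc[symmetric] ennreal_mult'[symmetric] powr_minus)
  then show ?thesis using b by (simp add: ennreal_mult')
qed

lemma set_integrable_iff_nn_integral_finite:
  fixes f :: "real \<Rightarrow> real"
  assumes [measurable]: "A \<in> sets borel" "f \<in> borel_measurable borel"
    and nonneg: "\<And>x. x \<in> A \<Longrightarrow> 0 \<le> f x"
  shows "set_integrable lborel A f \<longleftrightarrow> (\<integral>\<^sup>+x. ennreal (f x) * indicator A x \<partial>lborel) < \<infinity>"
proof -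
  have "(\<integral>\<^sup>+x. ennreal (f x) * indicator A x \<partial>lborel) = (\<integral>\<^sup>+x. ennreal (norm (indicator A x *\<^sub>R f x)) \<partial>lborel)"
    using nonneg by (intro nn_integral_cong) (auto simp: indicator_def)
  then show ?thesis
    unfolding set_integrable_def integrable_iff_bounded by simp
qed

lemma set_integrable_and_integral_eq_of_nn_integral:
  fixes f :: "real \<Rightarrow> real"
  assumes [measurable]: "A \<in> sets borel" "f \<in> borel_measurable borel"
    and nonneg: "\<And>x. x \<in> A \<Longrightarrow> 0 \<le> f x" and "0 \<le> r"
    and "(\<integral>\<^sup>+x. ennreal (f x) * indicator A x \<partial>lborel) = ennreal r"
  shows "set_integrable lborel A f \<and> (LINT x:A|lborel. f x) = r"
proof -
  have "(\<integral>\<^sup>+x. ennreal (indicator A x *\<^sub>R f x) \<partial>lborel) = ennreal r"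
    using assms(5) by (subst nn_integral_cong[where v = "\<lambda>x. ennreal (f x) * indicator A x"])
      (auto simp: indicator_def)
  then show ?thesis
    using nn_integral_eq_integrable[of "\<lambda>x. indicator A x *\<^sub>R f x" lborel r] nonneg \<open>0 \<le> r\<close>
    by (auto simp: indicator_def set_integrable_def set_lebesgue_integral_def)
qed

lemma nn_integral_eq_set_integral:
  fixes f :: "real \<Rightarrow> real"
  assumes "set_integrable lborel A f" and "\<And>x. x \<in> A \<Longrightarrow> 0 \<le> f x"
  shows "(\<integral>\<^sup>+x. ennreal (f x) * indicator A x \<partial>lborel) = ennreal (LINT x:A|lborel. f x)"
proof -
  have "(\<integral>\<^sup>+x. ennreal (f x) * indicator A x \<partial>lborel) = (\<integral>\<^sup>+x. ennreal (indicator A x *\<^sub>R f x) \<partial>lborel)"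
    by (intro nn_integral_cong) (auto simp: indicator_def)
  also have "\<dots> = ennreal (LINT x:A|lborel. f x)"
    using assms unfolding set_integrable_def set_lebesgue_integral_def
    by (intro nn_integral_eq_integral) (auto simp: indicator_def)
  finally show ?thesis .
qed

lemma set_integral_Gamma_real:
  fixes s :: real
  assumes "s > 0"
  shows "set_integrable lborel {0<..} (\<lambda>t. t powr (s - 1) * exp (- t))"
    and "(LINT t:{0<..}|lborel. t powr (s - 1) * exp (- t)) = Gamma s"
proof -
  have "set_integrable lborel {0<..} (\<lambda>t. t powr (s - 1) * exp (- t))
      \<and> (LINT t:{0<..}|lborel. t powr (s - 1) * exp (- t)) = Gamma s"
    using nn_integral_gamma_kernel[OF assms zero_less_one] assms
    by (intro set_integrable_and_integral_eq_of_nn_integral) (auto simp: less_imp_le)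
  then show "set_integrable lborel {0<..} (\<lambda>t. t powr (s - 1) * exp (- t))"
    and "(LINT t:{0<..}|lborel. t powr (s - 1) * exp (- t)) = Gamma s" by simp_all
qed

lemma nn_integral_change_of_variables_real:
  fixes f g g' :: "real \<Rightarrow> real" and S T :: "real set"
  assumes [measurable]: "S \<in> sets borel" "T \<in> sets borel"
    and deriv: "\<And>x. x \<in> S \<Longrightarrow> (g has_real_derivative g' x) (at x)"
    and "inj_on g S" and image: "g ` S = T"
    and nonneg: "\<And>y. y \<in> T \<Longrightarrow> 0 \<le> f y"
    and [measurable]: "f \<in> borel_measurable borel" "(\<lambda>x. \<bar>g' x\<bar> * f (g x)) \<in> borel_measurable borel"
  shows "(\<integral>\<^sup>+y. ennreal (f y) * indicator T y \<partial>lborel)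
       = (\<integral>\<^sup>+x. ennreal (\<bar>g' x\<bar> * f (g x)) * indicator S x \<partial>lborel)"
proof -
  define h where "h = (\<lambda>x. \<bar>g' x\<bar> * f (g x))"
  have [measurable]: "h \<in> borel_measurable borel" by (simp add: h_def)
  have h_nonneg: "\<And>x. x \<in> S \<Longrightarrow> 0 \<le> h x" using nonneg image by (auto simp: h_def)
  have change: "h absolutely_integrable_on S \<and> integral S h = c \<longleftrightarrow>
      f absolutely_integrable_on T \<and> integral T f = c" for c
    unfolding h_def image[symmetric]
    by (rule has_absolute_integral_change_of_variables_1')
       (use deriv \<open>inj_on g S\<close> in \<open>auto intro: has_field_derivative_at_within\<close>)
  have integral_case: "(\<integral>\<^sup>+x. ennreal (u x) * indicator U x \<partial>lborel) = ennreal (integral U u)"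
    if "u absolutely_integrable_on U" "\<And>x. x \<in> U \<Longrightarrow> 0 \<le> u x" for u and U :: "real set"
    using that set_lebesgue_integral_eq_integral(1)[OF that(1)]
    by (intro nn_integral_has_integral_lebesgue') (auto simp: has_integral_integral)
  have infinite_case: "(\<integral>\<^sup>+x. ennreal (u x) * indicator U x \<partial>lborel) = \<infinity>"
    if "\<not> u absolutely_integrable_on U" "\<And>x. x \<in> U \<Longrightarrow> 0 \<le> u x"
      "U \<in> sets borel" "u \<in> borel_measurable borel" for u and U :: "real set"
  proof -
    have "(\<lambda>x. indicator U x * u x) \<in> borel_measurable lborel" using that(3,4) by simp
    then show ?thesis
      using that set_integrable_iff_nn_integral_finite[of U u]
      by (simp add: set_integrable_def integrable_completion less_top[symmetric])
  qed
  show ?thesis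
  proof (cases "f absolutely_integrable_on T")
    case True
    with change[of "integral T f"] show ?thesis
      using integral_case[of T f] integral_case[of S h] nonneg h_nonneg by (simp add: h_def)
  next
    case False
    with change[of "integral S h"] show ?thesis
      using infinite_case[of T f] infinite_case[of S h] nonneg h_nonneg by (simp add: h_def)
  qed
qed

lemma nn_integral_even:
  fixes f :: "real \<Rightarrow> real"
  assumes [measurable]: "f \<in> borel_measurable borel" and even: "\<And>x. f (- x) = f x"
  shows "(\<integral>\<^sup>+x. ennreal (f x) \<partial>lborel) = 2 * (\<integral>\<^sup>+x. ennreal (f x) * indicator {0<..} x \<partial>lborel)"
proof -
  have "(\<integral>\<^sup>+x. ennreal (f x) \<partial>lborel) =
      (\<integral>\<^sup>+x. ennreal (f x) * indicator {..<0} x + ennreal (f x) * indicator {0<..} x \<partial>lborel)"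
    by (intro nn_integral_cong_AE)
       (use AE_lborel_singleton[of 0] in \<open>eventually_elim, auto simp: indicator_def\<close>)
  also have "\<dots> = (\<integral>\<^sup>+x. ennreal (f x) * indicator {..<0} x \<partial>lborel) +
      (\<integral>\<^sup>+x. ennreal (f x) * indicator {0<..} x \<partial>lborel)"
    by (rule nn_integral_add) auto
  also have "(\<integral>\<^sup>+x. ennreal (f x) * indicator {..<0} x \<partial>lborel) =
      (\<integral>\<^sup>+x. ennreal (f (0 + (-1) * x)) * indicator {..<0} (0 + (-1) * x) \<partial>lborel)"
    using nn_integral_real_affine[of "\<lambda>x. ennreal (f x) * indicator {..<0} x" "-1" 0] by simp
  also have "(\<lambda>x. ennreal (f (0 + (-1) * x)) * indicator {..<0::real} (0 + (-1) * x)) =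
      (\<lambda>x. ennreal (f x) * indicator {0<..} x)"
    by (auto simp: even indicator_def fun_eq_iff)
  finally show ?thesis by (simp add: mult_2)
qed

section \<open>Gaussian integrals\<close>

lemma bij_betw_minus_inverse:
  fixes \<beta> :: real
  assumes \<beta>: "\<beta> > 0"
  shows "bij_betw (\<lambda>x. x - \<beta> / x) {0<..} UNIV"
proof (rule bij_betw_imageI)
  have "strict_mono_on {0<..} (\<lambda>x. x - \<beta> / x)"
  proof (rule strict_mono_onI)
    fix x y :: real
    assume "x \<in> {0<..}" "y \<in> {0<..}" "x < y"
    then have "\<beta> / y < \<beta> / x" using \<beta> by (intro divide_strict_left_mono) auto
    then show "x - \<beta> / x < y - \<beta> / y" using \<open>x < y\<close> by simp
  qed
  then show "inj_on (\<lambda>x. x - \<beta> / x) {0<..}" by (rule strict_mono_on_imp_inj_on)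
  have "y \<in> (\<lambda>x. x - \<beta> / x) ` {0<..}" for y :: real
  proof -
    define r where "r = sqrt (y\<^sup>2 + 4 * \<beta>)"
    have r2: "r\<^sup>2 = y\<^sup>2 + 4 * \<beta>" using \<beta> by (simp add: r_def)
    have "r > \<bar>y\<bar>" unfolding r_def using \<beta> by (intro real_less_rsqrt) (simp add: power2_abs)
    then have x: "(y + r) / 2 > 0" by simp
    have "((y + r) / 2) * ((y + r) / 2) - \<beta> = y * ((y + r) / 2)"
      using r2 by (simp add: power2_eq_square field_simps)
    then have "(y + r) / 2 - \<beta> / ((y + r) / 2) = y" using x by (simp add: field_simps)
    then show ?thesis using x by (intro image_eqI[of _ _ "(y + r) / 2"]) auto
  qed
  then show "(\<lambda>x. x - \<beta> / x) ` {0<..} = UNIV" by auto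
qed

lemma nn_integral_std_normal_inverse_square_inversion:
  fixes \<beta> :: real
  assumes \<beta>: "\<beta> > 0"
  defines "E \<equiv> \<lambda>x. std_normal_density x * exp (- (\<beta>\<^sup>2 / (2 * x\<^sup>2)))"
  shows "(\<integral>\<^sup>+x. ennreal (E x) * indicator {0<..} x \<partial>lborel)
       = (\<integral>\<^sup>+x. ennreal (\<beta> / x\<^sup>2 * E x) * indicator {0<..} x \<partial>lborel)"
proof -
  have "(\<integral>\<^sup>+x. ennreal (E x) * indicator {0<..} x \<partial>lborel)
      = (\<integral>\<^sup>+x. ennreal (\<bar>- (\<beta> / x\<^sup>2)\<bar> * E (\<beta> / x)) * indicator {0<..} x \<partial>lborel)"
  proof (rule nn_integral_change_of_variables_real)
    show "(\<lambda>x. \<beta> / x) ` {0<..} = {0<..}"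
      using \<beta> by (auto intro!: image_eqI[where x = "\<beta> / y" for y])
    show "inj_on (\<lambda>x. \<beta> / x) {0<..}" using \<beta> by (auto simp: inj_on_def field_simps)
    show "((\<lambda>x. \<beta> / x) has_real_derivative - (\<beta> / x\<^sup>2)) (at x)" if "x \<in> {0<..}" for x
      using that by (auto intro!: derivative_eq_intros simp: power2_eq_square field_simps)
  qed (auto simp: E_def)
  also have "\<dots> = (\<integral>\<^sup>+x. ennreal (\<beta> / x\<^sup>2 * E x) * indicator {0<..} x \<partial>lborel)"
  proof (intro nn_integral_cong)
    fix x :: real
    show "ennreal (\<bar>- (\<beta> / x\<^sup>2)\<bar> * E (\<beta> / x)) * indicator {0<..} x =
        ennreal (\<beta> / x\<^sup>2 * E x) * indicator {0<..} x"
    proof (cases "x > 0")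
      case True
      then have "E (\<beta> / x) = E x"
        using \<beta> by (simp add: E_def std_normal_density_def power_divide exp_add[symmetric] field_simps)
      with True \<beta> show ?thesis by simp
    qed simp
  qed
  finally show ?thesis .
qed

lemma nn_integral_std_normal_inverse_square_shift:
  fixes \<beta> :: real
  assumes \<beta>: "\<beta> > 0"
  defines "E \<equiv> \<lambda>x. std_normal_density x * exp (- (\<beta>\<^sup>2 / (2 * x\<^sup>2)))"
  shows "(\<integral>\<^sup>+x. ennreal (E x) * indicator {0<..} x \<partial>lborel) +
      (\<integral>\<^sup>+x. ennreal (\<beta> / x\<^sup>2 * E x) * indicator {0<..} x \<partial>lborel) = ennreal (exp (- \<beta>))"
proof -
  have "ennreal (exp (- \<beta>)) = (\<integral>\<^sup>+y. ennreal (exp (- \<beta>) * std_normal_density y) * indicator UNIV y \<partial>lborel)"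
    using nn_integral_cmult[of "\<lambda>y. ennreal (std_normal_density y)" lborel "ennreal (exp (- \<beta>))"]
      nn_integral_eq_integrable[of std_normal_density lborel 1]
    by (simp add: ennreal_mult')
  also have "\<dots> = (\<integral>\<^sup>+x. ennreal (\<bar>1 + \<beta> / x\<^sup>2\<bar> * (exp (- \<beta>) * std_normal_density (x - \<beta> / x)))
      * indicator {0<..} x \<partial>lborel)"
    using bij_betw_minus_inverse[OF \<beta>] unfolding bij_betw_def
    by (intro nn_integral_change_of_variables_real)
      (auto intro!: derivative_eq_intros simp: power2_eq_square field_simps)
  also have "\<dots> = (\<integral>\<^sup>+x. ennreal (E x) * indicator {0<..} x +
      ennreal (\<beta> / x\<^sup>2 * E x) * indicator {0<..} x \<partial>lborel)"
  proof (intro nn_integral_cong)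
    fix x :: real
    show "ennreal (\<bar>1 + \<beta> / x\<^sup>2\<bar> * (exp (- \<beta>) * std_normal_density (x - \<beta> / x))) * indicator {0<..} x
        = ennreal (E x) * indicator {0<..} x + ennreal (\<beta> / x\<^sup>2 * E x) * indicator {0<..} x"
    proof (cases "x > 0")
      case True
      \<comment> \<open>Completing the square: \<open>(x - \<beta>/x)\<^sup>2 = x\<^sup>2 - 2\<beta> + \<beta>\<^sup>2/x\<^sup>2\<close>.\<close>
      have "exp (- \<beta>) * exp (- (x - \<beta> / x)\<^sup>2 / 2) = exp (- (x\<^sup>2 / 2)) * exp (- (\<beta>\<^sup>2 / (2 * x\<^sup>2)))"
        unfolding exp_add[symmetric] using True by (simp add: power2_eq_square field_simps)
      then have "exp (- \<beta>) * std_normal_density (x - \<beta> / x) = E x"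
        by (simp add: E_def std_normal_density_def)
      moreover have "\<bar>1 + \<beta> / x\<^sup>2\<bar> = 1 + \<beta> / x\<^sup>2" using \<beta> True by simp
      ultimately show ?thesis using True \<beta>
        by (simp add: E_def distrib_right ennreal_plus[symmetric] del: ennreal_plus)
    qed simp
  qed
  also have "\<dots> = (\<integral>\<^sup>+x. ennreal (E x) * indicator {0<..} x \<partial>lborel) +
      (\<integral>\<^sup>+x. ennreal (\<beta> / x\<^sup>2 * E x) * indicator {0<..} x \<partial>lborel)"
    by (rule nn_integral_add) (auto simp: E_def)
  finally show ?thesis ..
qed

lemma nn_integral_std_normal_inverse_square_half_line:
  fixes \<beta> :: real
  assumes \<beta>: "\<beta> > 0"
  defines "E \<equiv> \<lambda>x. std_normal_density x * exp (- (\<beta>\<^sup>2 / (2 * x\<^sup>2)))"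
  shows "(\<integral>\<^sup>+x. ennreal (E x) * indicator {0<..} x \<partial>lborel) = ennreal (exp (- \<beta>) / 2)"
    and "(\<integral>\<^sup>+x. ennreal (\<beta> / x\<^sup>2 * E x) * indicator {0<..} x \<partial>lborel) = ennreal (exp (- \<beta>) / 2)"
proof -
  let ?A = "\<integral>\<^sup>+x. ennreal (E x) * indicator {0<..} x \<partial>lborel"
  have "?A + ?A = ennreal (exp (- \<beta>))"
    using nn_integral_std_normal_inverse_square_shift[OF \<beta>]
      nn_integral_std_normal_inverse_square_inversion[OF \<beta>] by (simp add: E_def)
  then show "?A = ennreal (exp (- \<beta>) / 2)"
    by (cases ?A rule: ennreal_cases)
       (auto simp: ennreal_plus[symmetric] ennreal_inj simp del: ennreal_plus)
  then show "(\<integral>\<^sup>+x. ennreal (\<beta> / x\<^sup>2 * E x) * indicator {0<..} x \<partial>lborel) = ennreal (exp (- \<beta>) / 2)"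
    using nn_integral_std_normal_inverse_square_inversion[OF \<beta>] by (simp add: E_def)
qed

lemma nn_integral_std_normal_inverse_square_kernel:
  fixes lam t :: real
  assumes lam: "lam > 0" and t: "t > 0"
  shows "(\<integral>\<^sup>+x. ennreal ((1 + lam\<^sup>2 / x\<^sup>2) * exp (- (t * lam\<^sup>2 / x\<^sup>2)) * std_normal_density x) \<partial>lborel)
       = ennreal (exp (- (lam * sqrt (2 * t))) * (1 + lam / sqrt (2 * t)))"
proof -
  define \<beta> where "\<beta> = lam * sqrt (2 * t)"
  have \<beta>: "\<beta> > 0" using lam t by (simp add: \<beta>_def)
  have \<beta>2: "\<beta>\<^sup>2 = 2 * t * lam\<^sup>2" using t by (simp add: \<beta>_def power_mult_distrib)
  define E where "E = (\<lambda>x. std_normal_density x * exp (- (\<beta>\<^sup>2 / (2 * x\<^sup>2))))"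
  note half_line = nn_integral_std_normal_inverse_square_half_line[OF \<beta>, folded E_def]
  have "(\<integral>\<^sup>+x. ennreal ((1 + lam\<^sup>2 / x\<^sup>2) * exp (- (t * lam\<^sup>2 / x\<^sup>2)) * std_normal_density x) \<partial>lborel)
      = 2 * (\<integral>\<^sup>+x. ennreal ((1 + lam\<^sup>2 / x\<^sup>2) * exp (- (t * lam\<^sup>2 / x\<^sup>2)) * std_normal_density x)
          * indicator {0<..} x \<partial>lborel)"
    by (rule nn_integral_even) (auto simp: std_normal_density_def)
  also have "(\<integral>\<^sup>+x. ennreal ((1 + lam\<^sup>2 / x\<^sup>2) * exp (- (t * lam\<^sup>2 / x\<^sup>2)) * std_normal_density x)
      * indicator {0<..} x \<partial>lborel) = (\<integral>\<^sup>+x. ennreal (E x) * indicator {0<..} x +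
        ennreal (lam\<^sup>2 / \<beta>) * (ennreal (\<beta> / x\<^sup>2 * E x) * indicator {0<..} x) \<partial>lborel)"
  proof (intro nn_integral_cong)
    fix x :: real
    have "(1 + lam\<^sup>2 / x\<^sup>2) * exp (- (t * lam\<^sup>2 / x\<^sup>2)) * std_normal_density x =
        E x + lam\<^sup>2 / \<beta> * (\<beta> / x\<^sup>2 * E x)"
      using \<beta> unfolding E_def \<beta>2 by (simp add: field_simps)
    then show "ennreal ((1 + lam\<^sup>2 / x\<^sup>2) * exp (- (t * lam\<^sup>2 / x\<^sup>2)) * std_normal_density x)
        * indicator {0<..} x = ennreal (E x) * indicator {0<..} x +
        ennreal (lam\<^sup>2 / \<beta>) * (ennreal (\<beta> / x\<^sup>2 * E x) * indicator {0<..} x)"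
      using \<beta> by (cases "x > 0")
        (auto simp: E_def ennreal_mult'[symmetric] ennreal_plus[symmetric] simp del: ennreal_plus)
  qed
  also have "\<dots> = ennreal (exp (- \<beta>) / 2) + ennreal (lam\<^sup>2 / \<beta>) * ennreal (exp (- \<beta>) / 2)"
    using half_line by (subst nn_integral_add) (auto simp: nn_integral_cmult E_def)
  also have "2 * \<dots> = ennreal (exp (- \<beta>) * (1 + lam\<^sup>2 / \<beta>))"
    using \<beta> by (simp add: ennreal_mult'[symmetric] ennreal_plus[symmetric] ennreal_numeral[symmetric]
        field_simps del: ennreal_plus ennreal_numeral)
  also have "lam\<^sup>2 / \<beta> = lam / sqrt (2 * t)" using lam t by (simp add: \<beta>_def power2_eq_square)
  finally show ?thesis by (simp add: \<beta>_def)
qed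

lemma nn_integral_std_normal_abs_power_half_line:
  fixes q :: real
  assumes q: "q > - 1/2"
  shows "(\<integral>\<^sup>+x. ennreal (\<bar>x\<bar> powr (2 * q) * std_normal_density x) * indicator {0<..} x \<partial>lborel)
       = ennreal (2 powr (q - 1/2) / sqrt (2 * pi)) * ennreal (Gamma (q + 1/2))"
proof -
  have "(\<integral>\<^sup>+x. ennreal (\<bar>x\<bar> powr (2 * q) * std_normal_density x) * indicator {0<..} x \<partial>lborel)
      = (\<integral>\<^sup>+t. ennreal (\<bar>1 / sqrt (2 * t)\<bar> * (\<bar>sqrt (2 * t)\<bar> powr (2 * q) * std_normal_density (sqrt (2 * t))))
          * indicator {0<..} t \<partial>lborel)"
  proof (rule nn_integral_change_of_variables_real)
    show "(\<lambda>t. sqrt (2 * t)) ` {0<..} = {0<..}"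
    proof (intro subset_antisym subsetI)
      fix y :: real
      assume "y \<in> {0<..}"
      then show "y \<in> (\<lambda>t. sqrt (2 * t)) ` {0<..}" by (intro image_eqI[of _ _ "y\<^sup>2 / 2"]) auto
    qed auto
    show "inj_on (\<lambda>t. sqrt (2 * t)) {0<..}" by (auto simp: inj_on_def)
    show "((\<lambda>t. sqrt (2 * t)) has_real_derivative 1 / sqrt (2 * t)) (at t)" if "t \<in> {0<..}" for t
      using that by (auto intro!: derivative_eq_intros simp: field_simps)
  qed auto
  also have "\<dots> = (\<integral>\<^sup>+t. ennreal (2 powr (q - 1/2) / sqrt (2 * pi)) *
      (ennreal (t powr (q + 1/2 - 1) * exp (- (1 * t))) * indicator {0<..} t) \<partial>lborel)"
  proof (intro nn_integral_cong)
    fix t :: real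
    show "ennreal (\<bar>1 / sqrt (2 * t)\<bar> * (\<bar>sqrt (2 * t)\<bar> powr (2 * q) * std_normal_density (sqrt (2 * t))))
        * indicator {0<..} t = ennreal (2 powr (q - 1/2) / sqrt (2 * pi)) *
        (ennreal (t powr (q + 1/2 - 1) * exp (- (1 * t))) * indicator {0<..} t)"
    proof (cases "t > 0")
      case True
      have "\<bar>1 / sqrt (2 * t)\<bar> * (\<bar>sqrt (2 * t)\<bar> powr (2 * q) * std_normal_density (sqrt (2 * t)))
          = sqrt (2 * t) powr (2 * q) / sqrt (2 * t) * exp (- t) / sqrt (2 * pi)"
        using True by (simp add: std_normal_density_def)
      also have "sqrt (2 * t) powr (2 * q) / sqrt (2 * t) = 2 powr (q - 1/2) * t powr (q + 1/2 - 1)"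
        using True by (simp add: powr_half_sqrt[symmetric] powr_powr powr_diff powr_mult)
      finally have "\<bar>1 / sqrt (2 * t)\<bar> * (\<bar>sqrt (2 * t)\<bar> powr (2 * q) * std_normal_density (sqrt (2 * t)))
          = 2 powr (q - 1/2) / sqrt (2 * pi) * (t powr (q + 1/2 - 1) * exp (- (1 * t)))"
        by simp
      then show ?thesis using True by (simp add: ennreal_mult'[symmetric])
    qed simp
  qed
  also have "\<dots> = ennreal (2 powr (q - 1/2) / sqrt (2 * pi)) * ennreal (Gamma (q + 1/2))"
    using nn_integral_gamma_kernel[of "q + 1/2" 1] q by (subst nn_integral_cmult) auto
  finally show ?thesis .
qed

lemma std_normal_abs_moment:
  fixes q :: real
  assumes q: "q > - 1/2"
  shows "integrable lborel (\<lambda>x. \<bar>x\<bar> powr (2 * q) * std_normal_density x)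
    \<and> (LINT x|lborel. \<bar>x\<bar> powr (2 * q) * std_normal_density x) = 2 powr q * Gamma (q + 1/2) / sqrt pi"
proof -
  have "(\<integral>\<^sup>+x. ennreal (\<bar>x\<bar> powr (2 * q) * std_normal_density x) \<partial>lborel)
      = 2 * (ennreal (2 powr (q - 1/2) / sqrt (2 * pi)) * ennreal (Gamma (q + 1/2)))"
    unfolding nn_integral_std_normal_abs_power_half_line[OF q, symmetric]
    by (rule nn_integral_even) (auto simp: std_normal_density_def)
  also have "\<dots> = ennreal (2 powr q * Gamma (q + 1/2) / sqrt pi)"
  proof -
    have "2 * (2 powr (q - 1/2) / sqrt (2 * pi)) = 2 powr q / sqrt pi"
      by (simp add: powr_diff powr_half_sqrt real_sqrt_mult mult.assoc[symmetric])
    then have "2 * (2 powr (q - 1/2) / sqrt (2 * pi) * Gamma (q + 1/2)) = 2 powr q * Gamma (q + 1/2) / sqrt pi"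
      by (simp only: mult.assoc[symmetric]) simp
    then show ?thesis
      using q by (simp add: ennreal_mult'[symmetric] ennreal_numeral[symmetric] less_imp_le
          del: ennreal_numeral)
  qed
  finally show ?thesis
    using q by (subst nn_integral_eq_integrable[symmetric]) (auto simp: less_imp_le)
qed

section \<open>Gamma integrals of \<open>exp (- lam * sqrt (2 * t))\<close>\<close>

text \<open>The coefficients of \<open>exp (- lam * sqrt (2 * t))\<close> as a power series in \<open>sqrt t\<close>.\<close>
definition exp_sqrt_coeff :: "real \<Rightarrow> nat \<Rightarrow> real" where
  "exp_sqrt_coeff lam j = (- lam) ^ j * 2 powr (real j / 2) / fact j"

lemma exp_sqrt_coeff_sums:
  fixes lam t :: real
  assumes "t > 0"
  shows "(\<lambda>j. exp_sqrt_coeff lam j * t powr (real j / 2)) sums exp (- lam * sqrt (2 * t))"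
proof -
  have "(- lam * sqrt (2 * t)) ^ j /\<^sub>R fact j = exp_sqrt_coeff lam j * t powr (real j / 2)" for j
  proof -
    have "sqrt (2 * t) ^ j = 2 powr (real j / 2) * t powr (real j / 2)"
      using assms by (simp add: powr_half_sqrt[symmetric] powr_realpow[symmetric] powr_powr powr_mult)
    then have "(- lam * sqrt (2 * t)) ^ j = (- lam) ^ j * 2 powr (real j / 2) * t powr (real j / 2)"
      by (simp only: power_mult_distrib mult.assoc)
    then show ?thesis
      by (simp add: exp_sqrt_coeff_def field_simps)
  qed
  then show ?thesis using exp_converges[of "- lam * sqrt (2 * t)"] by simp
qed

lemma abs_exp_sqrt_coeff: "\<bar>exp_sqrt_coeff lam j\<bar> = exp_sqrt_coeff (- \<bar>lam\<bar>) j"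
  by (simp add: exp_sqrt_coeff_def abs_mult power_abs)

lemma exp_sqrt_coeff_Suc:
  "exp_sqrt_coeff lam (Suc m) = - lam * sqrt 2 / (real m + 1) * exp_sqrt_coeff lam m"
proof -
  have "(2::real) powr (real (Suc m) / 2) = 2 powr (real m / 2) * sqrt 2"
    by (simp add: add_divide_distrib powr_add powr_half_sqrt)
  moreover have "fact (Suc m) = (real m + 1) * fact m" by simp
  ultimately show ?thesis
    unfolding exp_sqrt_coeff_def power_Suc by (simp add: divide_simps)
qed

text \<open>\<open>gamma_exp_sqrt_integral s lam / Gamma s\<close> is \<open>E[exp (- lam * sqrt (2 * \<Gamma>\<^sub>s))]\<close> for a
  \<open>Gamma(s, 1)\<close>-distributed \<open>\<Gamma>\<^sub>s\<close>.\<close>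
definition gamma_exp_sqrt_integral :: "real \<Rightarrow> real \<Rightarrow> real" where
  "gamma_exp_sqrt_integral s lam =
     (LINT t:{0<..}|lborel. t powr (s - 1) * exp (- t) * exp (- lam * sqrt (2 * t)))"

lemma nn_integral_gamma_exp_sqrt_finite:
  fixes s lam :: real
  assumes s: "s > 0"
  shows "(\<integral>\<^sup>+t. ennreal (t powr (s - 1) * exp (- t) * exp (lam * sqrt (2 * t))) * indicator {0<..} t \<partial>lborel)
    < \<infinity>"
proof -
  have "(\<integral>\<^sup>+t. ennreal (t powr (s - 1) * exp (- t) * exp (lam * sqrt (2 * t))) * indicator {0<..} t \<partial>lborel)
      \<le> (\<integral>\<^sup>+t. ennreal (exp (lam\<^sup>2)) * (ennreal (t powr (s - 1) * exp (- ((1/2) * t))) * indicator {0<..} t)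
          \<partial>lborel)"
  proof (intro nn_integral_mono)
    fix t :: real
    show "ennreal (t powr (s - 1) * exp (- t) * exp (lam * sqrt (2 * t))) * indicator {0<..} t
        \<le> ennreal (exp (lam\<^sup>2)) * (ennreal (t powr (s - 1) * exp (- ((1/2) * t))) * indicator {0<..} t)"
    proof (cases "t > 0")
      case True
      have "0 \<le> (lam - sqrt (2 * t) / 2)\<^sup>2" by simp
      then have "lam * sqrt (2 * t) \<le> lam\<^sup>2 + t / 2"
        using True by (simp add: power2_diff power_divide)
      then have "exp (- t) * exp (lam * sqrt (2 * t)) \<le> exp (lam\<^sup>2) * exp (- ((1/2) * t))"
        by (simp add: exp_add[symmetric])
      then have "t powr (s - 1) * exp (- t) * exp (lam * sqrt (2 * t))
          \<le> exp (lam\<^sup>2) * (t powr (s - 1) * exp (- ((1/2) * t)))"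
        by (metis mult.assoc mult.left_commute mult_left_mono powr_ge_zero)
      then show ?thesis using True by (simp add: ennreal_mult'[symmetric])
    qed simp
  qed
  also have "\<dots> = ennreal (exp (lam\<^sup>2)) *
      (\<integral>\<^sup>+t. ennreal (t powr (s - 1) * exp (- ((1/2) * t))) * indicator {0<..} t \<partial>lborel)"
    by (rule nn_integral_cmult) simp
  also have "\<dots> = ennreal (exp (lam\<^sup>2)) * ennreal ((1/2) powr (- s) * Gamma s)"
    by (simp only: nn_integral_gamma_kernel[OF s, of "1/2"] half_gt_zero[OF zero_less_one])
  also have "\<dots> < \<infinity>" by (simp add: ennreal_mult'[symmetric])
  finally show ?thesis .
qed

definition gamma_exp_sqrt_term :: "real \<Rightarrow> real \<Rightarrow> nat \<Rightarrow> real \<Rightarrow> real" where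
  "gamma_exp_sqrt_term s lam j t =
     indicator {0<..} t * (exp_sqrt_coeff lam j * (t powr (s + real j / 2 - 1) * exp (- t)))"

lemma gamma_exp_sqrt_term_integral:
  fixes s lam :: real
  assumes "s > 0"
  shows "integrable lborel (gamma_exp_sqrt_term s lam j)"
    and "integral\<^sup>L lborel (gamma_exp_sqrt_term s lam j) = Gamma (s + real j / 2) * exp_sqrt_coeff lam j"
proof -
  have "s + real j / 2 > 0" using assms by (simp add: add_pos_nonneg)
  note Gamma = set_integral_Gamma_real[OF this, unfolded set_integrable_def set_lebesgue_integral_def]
  have "gamma_exp_sqrt_term s lam j =
      (\<lambda>t. exp_sqrt_coeff lam j * (indicator {0<..} t *\<^sub>R (t powr (s + real j / 2 - 1) * exp (- t))))"
    by (auto simp: gamma_exp_sqrt_term_def fun_eq_iff)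
  then show "integrable lborel (gamma_exp_sqrt_term s lam j)"
    and "integral\<^sup>L lborel (gamma_exp_sqrt_term s lam j) = Gamma (s + real j / 2) * exp_sqrt_coeff lam j"
    using Gamma by (simp_all add: mult.commute)
qed

lemma gamma_exp_sqrt_term_sums:
  fixes s lam t :: real
  shows "(\<lambda>j. gamma_exp_sqrt_term s lam j t) sums
    (indicator {0<..} t * (t powr (s - 1) * exp (- t) * exp (- lam * sqrt (2 * t))))"
proof (cases "t > 0")
  case True
  have "gamma_exp_sqrt_term s lam j t = t powr (s - 1) * exp (- t) * (exp_sqrt_coeff lam j * t powr (real j / 2))"
    for j using True by (simp add: gamma_exp_sqrt_term_def powr_add[symmetric] algebra_simps)
  then show ?thesis
    using sums_mult[OF exp_sqrt_coeff_sums[OF True, of lam], of "t powr (s - 1) * exp (- t)"] True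
    by simp
qed (simp add: gamma_exp_sqrt_term_def)

lemma abs_gamma_exp_sqrt_term: "\<bar>gamma_exp_sqrt_term s lam j t\<bar> = gamma_exp_sqrt_term s (- \<bar>lam\<bar>) j t"
  by (simp add: gamma_exp_sqrt_term_def abs_mult abs_exp_sqrt_coeff[symmetric])

lemma summable_integral_abs_gamma_exp_sqrt_term:
  fixes s lam :: real
  assumes s: "s > 0"
  shows "summable (\<lambda>j. \<integral>t. norm (gamma_exp_sqrt_term s lam j t) \<partial>lborel)"
proof (rule summable_suminf_not_top)
  let ?f = "gamma_exp_sqrt_term s (- \<bar>lam\<bar>)"
  have nonneg: "0 \<le> ?f j t" for j t by (simp only: abs_gamma_exp_sqrt_term[symmetric] abs_ge_zero)
  have "(\<Sum>j. ennreal (\<integral>t. norm (gamma_exp_sqrt_term s lam j t) \<partial>lborel)) = (\<Sum>j. \<integral>\<^sup>+t. ennreal (?f j t) \<partial>lborel)"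
    unfolding real_norm_def abs_gamma_exp_sqrt_term
    using gamma_exp_sqrt_term_integral(1)[OF s] nonneg
    by (intro suminf_cong nn_integral_eq_integral[symmetric]) auto
  also have "\<dots> = (\<integral>\<^sup>+t. (\<Sum>j. ennreal (?f j t)) \<partial>lborel)"
    by (rule nn_integral_suminf[symmetric]) (simp add: gamma_exp_sqrt_term_def)
  also have "\<dots> = (\<integral>\<^sup>+t. ennreal (indicator {0<..} t *
      (t powr (s - 1) * exp (- t) * exp (- (- \<bar>lam\<bar>) * sqrt (2 * t)))) \<partial>lborel)"
    by (intro nn_integral_cong suminf_ennreal_eq gamma_exp_sqrt_term_sums nonneg)
  also have "\<dots> = (\<integral>\<^sup>+t. ennreal (t powr (s - 1) * exp (- t) * exp (\<bar>lam\<bar> * sqrt (2 * t)))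
      * indicator {0<..} t \<partial>lborel)"
    by (intro nn_integral_cong) (simp add: indicator_def)
  finally show "(\<Sum>j. ennreal (\<integral>t. norm (gamma_exp_sqrt_term s lam j t) \<partial>lborel)) \<noteq> \<top>"
    using nn_integral_gamma_exp_sqrt_finite[OF s, of "\<bar>lam\<bar>"] by simp
qed simp

lemma gamma_exp_sqrt_integral_sums:
  fixes s lam :: real
  assumes s: "s > 0"
  shows "set_integrable lborel {0<..} (\<lambda>t. t powr (s - 1) * exp (- t) * exp (- lam * sqrt (2 * t)))"
    and "(\<lambda>j. Gamma (s + real j / 2) * exp_sqrt_coeff lam j) sums gamma_exp_sqrt_integral s lam"
proof -
  let ?f = "gamma_exp_sqrt_term s lam"
  have "summable (\<lambda>j. norm (?f j t))" for t
    unfolding real_norm_def abs_gamma_exp_sqrt_term by (rule sums_summable[OF gamma_exp_sqrt_term_sums])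
  then have "AE t in lborel. summable (\<lambda>j. norm (?f j t))" by simp
  note termwise = gamma_exp_sqrt_term_integral(1)[OF s, of lam] this summable_integral_abs_gamma_exp_sqrt_term[OF s]
  note series = integrable_suminf[OF termwise] sums_integral[OF termwise]
  have sum_f: "(\<lambda>t. \<Sum>j. ?f j t) =
      (\<lambda>t. indicator {0<..} t *\<^sub>R (t powr (s - 1) * exp (- t) * exp (- lam * sqrt (2 * t))))"
    using gamma_exp_sqrt_term_sums unfolding sums_iff by simp
  show "set_integrable lborel {0<..} (\<lambda>t. t powr (s - 1) * exp (- t) * exp (- lam * sqrt (2 * t)))"
    using series(1) unfolding sum_f set_integrable_def .
  show "(\<lambda>j. Gamma (s + real j / 2) * exp_sqrt_coeff lam j) sums gamma_exp_sqrt_integral s lam"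
    using series(2) unfolding sum_f gamma_exp_sqrt_integral_def set_lebesgue_integral_def
      gamma_exp_sqrt_term_integral(2)[OF s] .
qed

lemma gamma_exp_sqrt_integral_recurrence_sums:
  fixes q lam :: real
  assumes q: "q > - 1/2"
  shows "(\<lambda>k. if k = 0 then Gamma (q + 1) else q * Gamma (q + real k / 2) * exp_sqrt_coeff lam k) sums
    (gamma_exp_sqrt_integral (q + 1) lam + lam / sqrt 2 * gamma_exp_sqrt_integral (q + 1/2) lam)"
proof -
  define shifted where
    "shifted k = (if k = 0 then 0 else lam / sqrt 2 * (Gamma (q + real k / 2) * exp_sqrt_coeff lam (k - 1)))"
    for k
  have A: "(\<lambda>k. Gamma (q + 1 + real k / 2) * exp_sqrt_coeff lam k) sums gamma_exp_sqrt_integral (q + 1) lam"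
    using gamma_exp_sqrt_integral_sums(2)[of "q + 1" lam] q by simp
  have "(\<lambda>m. shifted (Suc m)) = (\<lambda>m. lam / sqrt 2 * (Gamma (q + 1/2 + real m / 2) * exp_sqrt_coeff lam m))"
    by (simp add: shifted_def add_divide_distrib add_ac)
  then have "(\<lambda>m. shifted (Suc m)) sums (lam / sqrt 2 * gamma_exp_sqrt_integral (q + 1/2) lam)"
    using sums_mult[OF gamma_exp_sqrt_integral_sums(2)[of "q + 1/2" lam], of "lam / sqrt 2"] q by simp
  moreover have "shifted 0 = 0" by (simp add: shifted_def)
  ultimately have B: "shifted sums (lam / sqrt 2 * gamma_exp_sqrt_integral (q + 1/2) lam)"
    using sums_Suc_iff[of shifted] by simp
  have "Gamma (q + 1 + real k / 2) * exp_sqrt_coeff lam k + shifted k =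
      (if k = 0 then Gamma (q + 1) else q * Gamma (q + real k / 2) * exp_sqrt_coeff lam k)" for k
  proof (cases k)
    case (Suc m)
    define z where "z = q + real k / 2"
    have "real m \<ge> 0" by simp
    then have "z > 0" using q by (simp add: z_def Suc field_simps)
    then have "z \<notin> \<int>\<^sub>\<le>\<^sub>0" using nonpos_Ints_nonpos by fastforce
    then have "Gamma (q + 1 + real k / 2) = z * Gamma z"
      using Gamma_plus1[of z] by (simp add: z_def add_ac)
    moreover have "lam / sqrt 2 * exp_sqrt_coeff lam m = - ((real m + 1) / 2) * exp_sqrt_coeff lam k"
      by (simp add: Suc exp_sqrt_coeff_Suc field_simps)
    moreover have "shifted k = Gamma z * (lam / sqrt 2 * exp_sqrt_coeff lam m)"
      by (simp add: shifted_def Suc z_def)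
    ultimately have "Gamma (q + 1 + real k / 2) * exp_sqrt_coeff lam k + shifted k =
        z * Gamma z * exp_sqrt_coeff lam k + Gamma z * (- ((real m + 1) / 2) * exp_sqrt_coeff lam k)"
      by (simp only:)
    also have "\<dots> = (z - (real m + 1) / 2) * Gamma z * exp_sqrt_coeff lam k"
      by (simp add: algebra_simps)
    also have "z - (real m + 1) / 2 = q" by (simp add: z_def Suc field_simps)
    finally show ?thesis using Suc by (simp add: z_def)
  qed (simp add: shifted_def exp_sqrt_coeff_def)
  then show ?thesis using sums_add[OF A B] by simp
qed

section \<open>The ratio moment of a standard Gaussian\<close>

text \<open>The exponent \<open>q + 1 > 0\<close> (rather than \<open>q\<close>) keeps the gamma integral convergent for
  \<open>-1/2 < q \<le> 0\<close>.\<close>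
lemma ratio_power_gamma_representation:
  fixes lam q x :: real
  assumes lam: "lam > 0" and q: "q > - 1" and x: "x \<noteq> 0"
  shows "ennreal (Gamma (q + 1) * (x\<^sup>2 / (lam\<^sup>2 + x\<^sup>2)) powr q) =
    (\<integral>\<^sup>+t. ennreal ((1 + lam\<^sup>2 / x\<^sup>2) * (t powr q * exp (- ((1 + lam\<^sup>2 / x\<^sup>2) * t)))) * indicator {0<..} t \<partial>lborel)"
proof -
  define a where "a = lam\<^sup>2 / x\<^sup>2"
  have a: "a > 0" using lam x by (simp add: a_def)
  have "(\<integral>\<^sup>+t. ennreal ((1 + a) * (t powr q * exp (- ((1 + a) * t)))) * indicator {0<..} t \<partial>lborel)
      = ennreal (1 + a) * (\<integral>\<^sup>+t. ennreal (t powr (q + 1 - 1) * exp (- ((1 + a) * t))) * indicator {0<..} t \<partial>lborel)"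
    using a by (subst nn_integral_cmult[symmetric]) (auto simp: ennreal_mult' mult.assoc)
  also have "\<dots> = ennreal ((1 + a) * ((1 + a) powr (- (q + 1)) * Gamma (q + 1)))"
    using a q by (simp only: nn_integral_gamma_kernel ennreal_mult')
  also have "(1 + a) * ((1 + a) powr (- s) * Gamma s) = Gamma s * (1 + a) powr (1 - s)" for s
    using a by (simp add: powr_diff powr_minus field_simps)
  also have "(1 + a) powr (1 - (q + 1)) = (1 + a) powr (- q)" by simp
  also have "(1 + a) powr (- q) = (x\<^sup>2 / (lam\<^sup>2 + x\<^sup>2)) powr q"
  proof -
    have "x\<^sup>2 / (lam\<^sup>2 + x\<^sup>2) = 1 / (1 + a)" using x by (simp add: a_def field_simps)
    then show ?thesis using a by (simp add: powr_minus_divide powr_divide)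
  qed
  finally show ?thesis by (simp add: a_def)
qed

lemma nn_integral_std_normal_ratio_moment:
  fixes lam q :: real
  assumes lam: "lam > 0" and q: "q > - 1/2"
  shows "ennreal (Gamma (q + 1)) * (\<integral>\<^sup>+x. ennreal ((x\<^sup>2 / (lam\<^sup>2 + x\<^sup>2)) powr q * std_normal_density x) \<partial>lborel)
    = (\<integral>\<^sup>+t. ennreal (t powr q * exp (- t) * (exp (- lam * sqrt (2 * t)) * (1 + lam / sqrt (2 * t))))
        * indicator {0<..} t \<partial>lborel)"
proof -
  define H where "H x t = ennreal (std_normal_density x) *
      (ennreal ((1 + lam\<^sup>2 / x\<^sup>2) * (t powr q * exp (- ((1 + lam\<^sup>2 / x\<^sup>2) * t)))) * indicator {0<..} t)" for x t :: real
  have [measurable]: "case_prod H \<in> borel_measurable (lborel \<Otimes>\<^sub>M lborel)"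
    unfolding H_def by measurable
  have q_gt: "q > - 1" using q by simp
  have inner_t: "ennreal (Gamma (q + 1) * ((x\<^sup>2 / (lam\<^sup>2 + x\<^sup>2)) powr q * std_normal_density x)) = (\<integral>\<^sup>+t. H x t \<partial>lborel)"
    if "x \<noteq> 0" for x
  proof -
    have "ennreal (Gamma (q + 1) * ((x\<^sup>2 / (lam\<^sup>2 + x\<^sup>2)) powr q * std_normal_density x)) =
        ennreal (std_normal_density x) * ennreal (Gamma (q + 1) * (x\<^sup>2 / (lam\<^sup>2 + x\<^sup>2)) powr q)"
      by (simp add: ennreal_mult'[symmetric] mult_ac)
    also have "\<dots> = (\<integral>\<^sup>+t. H x t \<partial>lborel)"
      using q unfolding ratio_power_gamma_representation[OF lam q_gt that] H_def
      by (intro nn_integral_cmult[symmetric]) simp_all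
    finally show ?thesis .
  qed
  have inner_x: "(\<integral>\<^sup>+x. H x t \<partial>lborel) = ennreal (t powr q * exp (- t) *
      (exp (- lam * sqrt (2 * t)) * (1 + lam / sqrt (2 * t)))) * indicator {0<..} t" for t
  proof (cases "t > 0")
    case True
    have "H x t = ennreal (t powr q * exp (- t)) *
        ennreal ((1 + lam\<^sup>2 / x\<^sup>2) * exp (- (t * lam\<^sup>2 / x\<^sup>2)) * std_normal_density x)" for x
    proof -
      have "exp (- ((1 + lam\<^sup>2 / x\<^sup>2) * t)) = exp (- t) * exp (- (t * lam\<^sup>2 / x\<^sup>2))"
        by (simp add: exp_add[symmetric] algebra_simps)
      then show ?thesis using True by (simp add: H_def ennreal_mult'[symmetric] mult_ac)
    qed
    then have "(\<integral>\<^sup>+x. H x t \<partial>lborel) = ennreal (t powr q * exp (- t)) *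
        (\<integral>\<^sup>+x. ennreal ((1 + lam\<^sup>2 / x\<^sup>2) * exp (- (t * lam\<^sup>2 / x\<^sup>2)) * std_normal_density x) \<partial>lborel)"
      by (simp add: nn_integral_cmult)
    with True show ?thesis
      by (simp add: nn_integral_std_normal_inverse_square_kernel[OF lam True] ennreal_mult'[symmetric])
  qed (simp add: H_def)
  have "ennreal (Gamma (q + 1)) * (\<integral>\<^sup>+x. ennreal ((x\<^sup>2 / (lam\<^sup>2 + x\<^sup>2)) powr q * std_normal_density x) \<partial>lborel)
      = (\<integral>\<^sup>+x. ennreal (Gamma (q + 1) * ((x\<^sup>2 / (lam\<^sup>2 + x\<^sup>2)) powr q * std_normal_density x)) \<partial>lborel)"
    using q by (subst nn_integral_cmult[symmetric]) (auto simp: ennreal_mult')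
  also have "\<dots> = (\<integral>\<^sup>+x. \<integral>\<^sup>+t. H x t \<partial>lborel \<partial>lborel)"
    using AE_lborel_singleton[of 0] by (intro nn_integral_cong_AE) (auto elim!: eventually_mono simp: inner_t)
  also have "\<dots> = (\<integral>\<^sup>+t. \<integral>\<^sup>+x. H x t \<partial>lborel \<partial>lborel)"
    by (rule lborel_pair.Fubini'[symmetric]) measurable
  finally show ?thesis by (simp only: inner_x)
qed

lemma std_normal_ratio_moment:
  fixes lam q :: real
  assumes lam: "lam > 0" and q: "q > - 1/2"
  shows "integrable lborel (\<lambda>x. (x\<^sup>2 / (lam\<^sup>2 + x\<^sup>2)) powr q * std_normal_density x)"
    and "Gamma (q + 1) * (LINT x|lborel. (x\<^sup>2 / (lam\<^sup>2 + x\<^sup>2)) powr q * std_normal_density x) =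
      gamma_exp_sqrt_integral (q + 1) lam + lam / sqrt 2 * gamma_exp_sqrt_integral (q + 1/2) lam"
proof -
  let ?N = "\<integral>\<^sup>+x. ennreal ((x\<^sup>2 / (lam\<^sup>2 + x\<^sup>2)) powr q * std_normal_density x) \<partial>lborel"
  have "Gamma (q + 1) > 0" using q by simp
  define J where "J s = gamma_exp_sqrt_integral s lam" for s
  define k where "k s t = t powr (s - 1) * exp (- t) * exp (- lam * sqrt (2 * t))" for s t :: real
  have J_nonneg: "J s \<ge> 0" for s
    unfolding J_def gamma_exp_sqrt_integral_def set_lebesgue_integral_def
    by (intro integral_nonneg_AE AE_I2) (auto simp: indicator_def)
  have J: "(\<integral>\<^sup>+t. ennreal (k s t) * indicator {0<..} t \<partial>lborel) = ennreal (J s)" if "s > 0" for s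
    unfolding J_def gamma_exp_sqrt_integral_def k_def
    by (rule nn_integral_eq_set_integral[OF gamma_exp_sqrt_integral_sums(1)[OF that]]) simp
  have split: "t powr q * exp (- t) * (exp (- (lam * sqrt (2 * t))) * (1 + lam / sqrt (2 * t))) =
      k (q + 1) t + lam / sqrt 2 * k (q + 1/2) t" if "t > 0" for t
  proof -
    have "t powr (q - 1/2) = t powr q / sqrt t"
      using that by (simp add: powr_diff powr_half_sqrt[symmetric])
    then show ?thesis using that by (simp add: k_def real_sqrt_mult field_simps)
  qed
  have "ennreal (Gamma (q + 1)) * ?N
      = (\<integral>\<^sup>+t. ennreal (k (q + 1) t) * indicator {0<..} t +
          ennreal (lam / sqrt 2) * (ennreal (k (q + 1/2) t) * indicator {0<..} t) \<partial>lborel)"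
    unfolding nn_integral_std_normal_ratio_moment[OF lam q]
    using lam by (intro nn_integral_cong)
      (auto simp: split indicator_def k_def ennreal_mult'[symmetric] ennreal_plus[symmetric] simp del: ennreal_plus)
  also have "\<dots> = ennreal (J (q + 1) + lam / sqrt 2 * J (q + 1/2))" (is "_ = ennreal ?X")
    using q lam J_nonneg J[of "q + 1"] J[of "q + 1/2"]
    by (subst nn_integral_add) (auto simp: k_def nn_integral_cmult ennreal_mult'[symmetric] ennreal_plus[symmetric]
        simp del: ennreal_plus)
  finally have "?N = ennreal (?X / Gamma (q + 1))"
    by (rule ennreal_eq_divide_if_mult_eq[OF \<open>Gamma (q + 1) > 0\<close>])
  then have "integrable lborel (\<lambda>x. (x\<^sup>2 / (lam\<^sup>2 + x\<^sup>2)) powr q * std_normal_density x) \<and>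
      (LINT x|lborel. (x\<^sup>2 / (lam\<^sup>2 + x\<^sup>2)) powr q * std_normal_density x) =
        (J (q + 1) + lam / sqrt 2 * J (q + 1/2)) / Gamma (q + 1)"
    using J_nonneg lam q by (subst nn_integral_eq_integrable[symmetric]) auto
  then show "integrable lborel (\<lambda>x. (x\<^sup>2 / (lam\<^sup>2 + x\<^sup>2)) powr q * std_normal_density x)"
    and "Gamma (q + 1) * (LINT x|lborel. (x\<^sup>2 / (lam\<^sup>2 + x\<^sup>2)) powr q * std_normal_density x) =
      gamma_exp_sqrt_integral (q + 1) lam + lam / sqrt 2 * gamma_exp_sqrt_integral (q + 1/2) lam"
    using \<open>Gamma (q + 1) > 0\<close> by (simp_all add: J_def)
qed

section \<open>The density of \<open>P1~(lam)\<close>\<close>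

lemma P1_density_ratio_substitution:
  fixes lam x :: real
  assumes lam: "lam > 0" and x: "x > 0"
  shows "2 * x * lam\<^sup>2 / (lam\<^sup>2 + x\<^sup>2)\<^sup>2 * P1_density lam (x\<^sup>2 / (lam\<^sup>2 + x\<^sup>2)) = 2 * std_normal_density x"
proof -
  define u where "u = lam\<^sup>2 + x\<^sup>2"
  define r where "r = sqrt u"
  have u: "u > 0" using lam by (simp add: u_def add_pos_nonneg)
  then have r: "r > 0" "u = r * r" by (simp_all add: r_def)
  have p: "x\<^sup>2 / u > 0" and one_minus_p_pos: "lam\<^sup>2 / u > 0" and one_minus_p: "1 - x\<^sup>2 / u = lam\<^sup>2 / u"
    using u x lam by (simp_all add: u_def field_simps)
  have "P1_density lam (x\<^sup>2 / u) =
      lam / sqrt (2 * pi) * (1 / sqrt (x\<^sup>2 / u)) * (1 / (lam\<^sup>2 / u * sqrt (lam\<^sup>2 / u))) * exp (- (x\<^sup>2 / 2))"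
    using u lam unfolding P1_density_def one_minus_p powr_minus_half[OF p]
      powr_minus_three_halves[OF one_minus_p_pos] by simp
  also have "sqrt (x\<^sup>2 / u) = x / r" using x by (simp add: real_sqrt_divide r_def)
  also have "sqrt (lam\<^sup>2 / u) = lam / r" using lam by (simp add: real_sqrt_divide r_def)
  finally show ?thesis
    unfolding u_def[symmetric] r(2) using x lam r(1)
    by (simp add: std_normal_density_def power2_eq_square field_simps)
qed

lemma bij_betw_square_ratio:
  fixes lam :: real
  assumes lam: "lam > 0"
  shows "bij_betw (\<lambda>x. x\<^sup>2 / (lam\<^sup>2 + x\<^sup>2)) {0<..} {0<..<1}"
proof (rule bij_betw_imageI)
  have pos: "lam\<^sup>2 + x\<^sup>2 > 0" for x using lam by (simp add: add_pos_nonneg)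
  have "strict_mono_on {0<..} (\<lambda>x. x\<^sup>2 / (lam\<^sup>2 + x\<^sup>2))"
  proof (rule strict_mono_onI)
    fix x y :: real
    assume "x \<in> {0<..}" "y \<in> {0<..}" "x < y"
    then have "x\<^sup>2 * (lam\<^sup>2 + y\<^sup>2) < y\<^sup>2 * (lam\<^sup>2 + x\<^sup>2)"
      using lam by (simp add: power_strict_mono algebra_simps)
    then show "x\<^sup>2 / (lam\<^sup>2 + x\<^sup>2) < y\<^sup>2 / (lam\<^sup>2 + y\<^sup>2)" using pos[of x] pos[of y] by (simp add: field_simps)
  qed
  then show "inj_on (\<lambda>x. x\<^sup>2 / (lam\<^sup>2 + x\<^sup>2)) {0<..}" by (rule strict_mono_on_imp_inj_on)
  show "(\<lambda>x. x\<^sup>2 / (lam\<^sup>2 + x\<^sup>2)) ` {0<..} = {0<..<1}"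
  proof (intro subset_antisym subsetI)
    fix p :: real
    assume p: "p \<in> {0<..<1}"
    define x where "x = lam * sqrt (p / (1 - p))"
    have "x > 0" using p lam by (simp add: x_def)
    have "x\<^sup>2 = lam\<^sup>2 * (p / (1 - p))" using p by (simp add: x_def power_mult_distrib)
    then have "x\<^sup>2 / (lam\<^sup>2 + x\<^sup>2) = p" using p lam by (simp add: field_simps)
    with \<open>x > 0\<close> show "p \<in> (\<lambda>x. x\<^sup>2 / (lam\<^sup>2 + x\<^sup>2)) ` {0<..}" by force
  next
    fix p :: real
    assume "p \<in> (\<lambda>x. x\<^sup>2 / (lam\<^sup>2 + x\<^sup>2)) ` {0<..}"
    then obtain x :: real where "x > 0" and "p = x\<^sup>2 / (lam\<^sup>2 + x\<^sup>2)" by auto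
    then show "p \<in> {0<..<1}" using pos[of x] lam by (simp add: divide_less_eq)
  qed
qed

lemma nn_integral_P1_moment:
  fixes lam q :: real
  assumes lam: "lam > 0"
  shows "(\<integral>\<^sup>+p. ennreal (p powr q * P1_density lam p) * indicator {0<..<1} p \<partial>lborel)
       = (\<integral>\<^sup>+x. ennreal ((x\<^sup>2 / (lam\<^sup>2 + x\<^sup>2)) powr q * std_normal_density x) \<partial>lborel)"
proof -
  define g where "g = (\<lambda>x::real. x\<^sup>2 / (lam\<^sup>2 + x\<^sup>2))"
  define g' where "g' x = 2 * x * lam\<^sup>2 / (lam\<^sup>2 + x\<^sup>2)\<^sup>2" for x :: real
  define F where "F x = (x\<^sup>2 / (lam\<^sup>2 + x\<^sup>2)) powr q * std_normal_density x" for x :: real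
  have "(g has_real_derivative g' x) (at x)" for x
    unfolding g_def g'_def using lam
    by (auto intro!: derivative_eq_intros simp: power2_eq_square add_pos_nonneg field_simps)
  then have "(\<integral>\<^sup>+p. ennreal (p powr q * P1_density lam p) * indicator {0<..<1} p \<partial>lborel)
      = (\<integral>\<^sup>+x. ennreal (\<bar>g' x\<bar> * (g x powr q * P1_density lam (g x))) * indicator {0<..} x \<partial>lborel)"
    using bij_betw_square_ratio[OF lam, folded g_def] lam unfolding bij_betw_def
    by (intro nn_integral_change_of_variables_real) (auto simp: g_def g'_def P1_density_def)
  also have "\<dots> = (\<integral>\<^sup>+x. 2 * (ennreal (F x) * indicator {0<..} x) \<partial>lborel)"
  proof (intro nn_integral_cong)
    fix x :: real
    show "ennreal (\<bar>g' x\<bar> * (g x powr q * P1_density lam (g x))) * indicator {0<..} x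
        = 2 * (ennreal (F x) * indicator {0<..} x)"
    proof (cases "x > 0")
      case True
      then have "\<bar>g' x\<bar> = g' x" using lam by (simp add: g'_def)
      then have "\<bar>g' x\<bar> * (g x powr q * P1_density lam (g x)) = g x powr q * (g' x * P1_density lam (g x))"
        by (simp only: mult_ac)
      also have "g' x * P1_density lam (g x) = 2 * std_normal_density x"
        unfolding g_def g'_def by (rule P1_density_ratio_substitution[OF lam True])
      finally have "\<bar>g' x\<bar> * (g x powr q * P1_density lam (g x)) = 2 * F x" by (simp add: F_def g_def)
      then show ?thesis by (simp add: F_def ennreal_mult' mult.assoc)
    qed simp
  qed
  also have "\<dots> = (\<integral>\<^sup>+x. ennreal (F x) \<partial>lborel)"
    by (subst nn_integral_cmult) (auto simp: F_def nn_integral_even[symmetric] std_normal_density_def)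
  finally show ?thesis by (simp add: F_def)
qed

lemma P1_moment_eq_std_normal_ratio_moment:
  fixes lam q :: real
  assumes lam: "lam > 0" and q: "q > - 1/2"
  shows "set_integrable lborel {0<..<1} (\<lambda>p. p powr q * P1_density lam p)"
    and "mu_moment q lam = (LINT x|lborel. (x\<^sup>2 / (lam\<^sup>2 + x\<^sup>2)) powr q * std_normal_density x)"
proof -
  have "(\<integral>\<^sup>+p. ennreal (p powr q * P1_density lam p) * indicator {0<..<1} p \<partial>lborel) =
      ennreal (LINT x|lborel. (x\<^sup>2 / (lam\<^sup>2 + x\<^sup>2)) powr q * std_normal_density x)"
    unfolding nn_integral_P1_moment[OF lam]
    using std_normal_ratio_moment(1)[OF lam q] by (intro nn_integral_eq_integral) auto
  then have "set_integrable lborel {0<..<1} (\<lambda>p. p powr q * P1_density lam p) \<and>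
      (LINT p:{0<..<1}|lborel. p powr q * P1_density lam p) =
        (LINT x|lborel. (x\<^sup>2 / (lam\<^sup>2 + x\<^sup>2)) powr q * std_normal_density x)"
    using lam by (intro set_integrable_and_integral_eq_of_nn_integral integral_nonneg_AE)
      (auto simp: P1_density_def)
  then show "set_integrable lborel {0<..<1} (\<lambda>p. p powr q * P1_density lam p)"
    and "mu_moment q lam = (LINT x|lborel. (x\<^sup>2 / (lam\<^sup>2 + x\<^sup>2)) powr q * std_normal_density x)"
    by (simp_all add: mu_moment_def)
qed

section \<open>The Hermite function\<close>

lemma Gamma_legendre_duplication_real:
  fixes q :: real
  assumes "q \<notin> \<int>\<^sub>\<le>\<^sub>0" and "q + 1/2 \<notin> \<int>\<^sub>\<le>\<^sub>0"
  shows "Gamma q * Gamma (q + 1/2) = 2 powr (1 - 2 * q) * sqrt pi * Gamma (2 * q)"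
proof -
  have "complex_of_real q \<notin> \<int>\<^sub>\<le>\<^sub>0" "complex_of_real q + 1/2 \<notin> \<int>\<^sub>\<le>\<^sub>0"
    using assms of_real_in_nonpos_Ints_iff[where 'a = complex, of q]
      of_real_in_nonpos_Ints_iff[where 'a = complex, of "q + 1/2"] by simp_all
  note duplication = Gamma_legendre_duplication[OF this]
  have "exp ((1 - 2 * complex_of_real q) * of_real (ln 2)) = complex_of_real (2 powr (1 - 2 * q))"
    by (simp add: powr_def exp_of_real[symmetric])
  then have "complex_of_real (Gamma q * Gamma (q + 1/2)) = complex_of_real (2 powr (1 - 2 * q) * sqrt pi * Gamma (2 * q))"
    using duplication by (simp add: Gamma_complex_of_real[symmetric])
  then show ?thesis by (simp only: of_real_eq_iff)
qed

lemma not_nonpos_Int_if_gt_minus_one: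
  fixes x :: real
  assumes "x > - 1" and "x \<noteq> 0"
  shows "x \<notin> \<int>\<^sub>\<le>\<^sub>0"
  using assms by (auto elim!: nonpos_Ints_cases')

lemma hermite_fun_eq_series:
  fixes q lam S :: real
  assumes "q \<noteq> 0" and "(\<lambda>j. Gamma (q + real j / 2) * exp_sqrt_coeff lam j) sums S"
  shows "hermite_fun (- 2 * q) lam = 2 powr q * S / (2 * Gamma (2 * q))"
proof -
  have "(\<lambda>j. Gamma (q + real j / 2) * 2 powr (q + real j / 2) * (- lam) ^ j / fact j) =
      (\<lambda>j. 2 powr q * (Gamma (q + real j / 2) * exp_sqrt_coeff lam j))"
    by (simp add: exp_sqrt_coeff_def powr_add fun_eq_iff)
  with sums_mult[OF assms(2), of "2 powr q"] assms(1) show ?thesis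
    by (simp add: hermite_fun_def sums_iff)
qed

lemma std_normal_ratio_moment_hermite_sums:
  fixes lam q :: real
  assumes lam: "lam > 0" and q: "q > - 1/2" "q \<noteq> 0"
  shows "(\<lambda>j. Gamma (q + real j / 2) * exp_sqrt_coeff lam j) sums
    (Gamma q * (LINT x|lborel. (x\<^sup>2 / (lam\<^sup>2 + x\<^sup>2)) powr q * std_normal_density x))"
proof -
  have "q \<notin> \<int>\<^sub>\<le>\<^sub>0" using q by (intro not_nonpos_Int_if_gt_minus_one) auto
  then have "Gamma (q + 1) = q * Gamma q" by (rule Gamma_plus1)
  then have "(\<lambda>k. if k = 0 then Gamma (q + 1) else q * Gamma (q + real k / 2) * exp_sqrt_coeff lam k) =
      (\<lambda>k. q * (Gamma (q + real k / 2) * exp_sqrt_coeff lam k))"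
    by (simp add: fun_eq_iff exp_sqrt_coeff_def)
  then have "(\<lambda>k. q * (Gamma (q + real k / 2) * exp_sqrt_coeff lam k)) sums
      (Gamma (q + 1) * (LINT x|lborel. (x\<^sup>2 / (lam\<^sup>2 + x\<^sup>2)) powr q * std_normal_density x))"
    using gamma_exp_sqrt_integral_recurrence_sums[OF q(1), of lam] std_normal_ratio_moment(2)[OF lam q(1)]
    by simp
  then have "(\<lambda>k. q * (Gamma (q + real k / 2) * exp_sqrt_coeff lam k)) sums
      (q * (Gamma q * (LINT x|lborel. (x\<^sup>2 / (lam\<^sup>2 + x\<^sup>2)) powr q * std_normal_density x)))"
    using \<open>Gamma (q + 1) = q * Gamma q\<close> by (simp only: mult.assoc)
  then show ?thesis using q(2) by (simp add: sums_mult_iff)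
qed

lemma std_normal_ratio_moment_eq_hermite:
  fixes lam q :: real
  assumes lam: "lam > 0" and q: "q > - 1/2"
  shows "(LINT x|lborel. (x\<^sup>2 / (lam\<^sup>2 + x\<^sup>2)) powr q * std_normal_density x) =
    (LINT x|lborel. \<bar>x\<bar> powr (2 * q) * std_normal_density x) * hermite_fun (- 2 * q) lam"
proof (cases "q = 0")
  case True
  let ?M = "LINT x|lborel. (x\<^sup>2 / (lam\<^sup>2 + x\<^sup>2)) powr q * std_normal_density x"
  have "(\<lambda>k. if k = 0 then Gamma (q + 1) else q * Gamma (q + real k / 2) * exp_sqrt_coeff lam k) =
      (\<lambda>k. if k = 0 then 1 else 0)"
    using True by (simp add: fun_eq_iff)
  then have "(\<lambda>k. if k = 0 then 1 else 0) sums (Gamma (q + 1) * ?M)"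
    using gamma_exp_sqrt_integral_recurrence_sums[OF q, of lam] std_normal_ratio_moment(2)[OF lam q]
    by simp
  then have "?M = 1"
    using sums_single[of 0 "\<lambda>_. 1::real"] True by (simp add: sums_iff)
  then show ?thesis
    using std_normal_abs_moment[OF q] True by (simp add: hermite_fun_def Gamma_one_half_real)
next
  case False
  let ?M = "LINT x|lborel. (x\<^sup>2 / (lam\<^sup>2 + x\<^sup>2)) powr q * std_normal_density x"
  let ?E = "LINT x|lborel. \<bar>x\<bar> powr (2 * q) * std_normal_density x"
  have q_half: "q \<notin> \<int>\<^sub>\<le>\<^sub>0" "q + 1/2 \<notin> \<int>\<^sub>\<le>\<^sub>0" "2 * q \<notin> \<int>\<^sub>\<le>\<^sub>0"
    using False q by (simp_all add: not_nonpos_Int_if_gt_minus_one)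
  have "Gamma (q + 1/2) = Gamma q * Gamma (q + 1/2) / Gamma q"
    using Gamma_nonzero[OF q_half(1)] by simp
  also have "\<dots> = 2 powr (1 - 2 * q) * sqrt pi * Gamma (2 * q) / Gamma q"
    by (simp only: Gamma_legendre_duplication_real[OF q_half(1,2)])
  also have "2 powr (1 - 2 * q) = 2 / (2 powr q * (2::real) powr q)"
    by (simp add: powr_diff powr_add[symmetric])
  finally have "Gamma (q + 1/2) = 2 / (2 powr q * 2 powr q) * sqrt pi * Gamma (2 * q) / Gamma q" .
  moreover have "?E = 2 powr q * Gamma (q + 1/2) / sqrt pi"
    using std_normal_abs_moment[OF q] by simp
  moreover have "hermite_fun (- 2 * q) lam = 2 powr q * (Gamma q * ?M) / (2 * Gamma (2 * q))"
    by (rule hermite_fun_eq_series[OF False std_normal_ratio_moment_hermite_sums[OF lam q False]])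
  ultimately show ?thesis
    using Gamma_nonzero[OF q_half(1)] Gamma_nonzero[OF q_half(3)] by (simp only:) (simp add: field_simps)
qed

lemma std_normal_ratio_moment_eq_gamma_exp_sqrt:
  fixes lam q :: real
  assumes lam: "lam > 0" and q: "q > 0"
  shows "(LINT x|lborel. (x\<^sup>2 / (lam\<^sup>2 + x\<^sup>2)) powr q * std_normal_density x) =
    gamma_exp_sqrt_integral q lam / Gamma q"
proof -
  have "(\<lambda>j. Gamma (q + real j / 2) * exp_sqrt_coeff lam j) sums
      (Gamma q * (LINT x|lborel. (x\<^sup>2 / (lam\<^sup>2 + x\<^sup>2)) powr q * std_normal_density x))"
    using q by (intro std_normal_ratio_moment_hermite_sums[OF lam]) auto
  then have "Gamma q * (LINT x|lborel. (x\<^sup>2 / (lam\<^sup>2 + x\<^sup>2)) powr q * std_normal_density x) =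
      gamma_exp_sqrt_integral q lam"
    using gamma_exp_sqrt_integral_sums(2)[OF q] by (rule sums_unique2)
  then show ?thesis using Gamma_real_pos[OF q] by (simp add: field_simps)
qed

lemma set_integral_gamma_density_exp_sqrt:
  fixes lam q :: real
  shows "(LINT t:{0<..}|lborel. exp (- lam * sqrt (2 * t)) * (t powr (q - 1) * exp (- t) / Gamma q)) =
    gamma_exp_sqrt_integral q lam / Gamma q"
  unfolding gamma_exp_sqrt_integral_def by (simp add: mult_ac)

theorem lemma8p2:
  fixes lam q :: real
  assumes "lam > 0" and "q > - 1/2"
  shows "set_integrable lborel {0<..<1} (\<lambda>p. p powr q * P1_density lam p)
    \<and> integrable lborel (\<lambda>x. (x^2 / (lam^2 + x^2)) powr q * std_normal_density x)
    \<and> integrable lborel (\<lambda>x. \<bar>x\<bar> powr (2 * q) * std_normal_density x)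
    \<and> mu_moment q lam =
        (LINT x|lborel. (x^2 / (lam^2 + x^2)) powr q * std_normal_density x)
    \<and> (LINT x|lborel. (x^2 / (lam^2 + x^2)) powr q * std_normal_density x) =
        (LINT x|lborel. \<bar>x\<bar> powr (2 * q) * std_normal_density x) * hermite_fun (- 2 * q) lam
    \<and> (LINT x|lborel. \<bar>x\<bar> powr (2 * q) * std_normal_density x) =
        2 powr q * Gamma (q + 1/2) / Gamma (1/2)
    \<and> (q > 0 \<longrightarrow>
        mu_moment q lam =
          (LINT t:{0<..}|lborel. exp (- lam * sqrt (2 * t)) * (t powr (q - 1) * exp (- t) / Gamma q)))"
proof (intro conjI impI)
  show "set_integrable lborel {0<..<1} (\<lambda>p. p powr q * P1_density lam p)"
    and "mu_moment q lam = (LINT x|lborel. (x^2 / (lam^2 + x^2)) powr q * std_normal_density x)"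
    by (rule P1_moment_eq_std_normal_ratio_moment[OF assms])+
  show "integrable lborel (\<lambda>x. (x^2 / (lam^2 + x^2)) powr q * std_normal_density x)"
    by (rule std_normal_ratio_moment(1)[OF assms])
  show "integrable lborel (\<lambda>x. \<bar>x\<bar> powr (2 * q) * std_normal_density x)"
    and "(LINT x|lborel. \<bar>x\<bar> powr (2 * q) * std_normal_density x) = 2 powr q * Gamma (q + 1/2) / Gamma (1/2)"
    using std_normal_abs_moment[OF assms(2)] by (simp_all add: Gamma_one_half_real)
  show "(LINT x|lborel. (x^2 / (lam^2 + x^2)) powr q * std_normal_density x) =
      (LINT x|lborel. \<bar>x\<bar> powr (2 * q) * std_normal_density x) * hermite_fun (- 2 * q) lam"
    by (rule std_normal_ratio_moment_eq_hermite[OF assms])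
  show "mu_moment q lam =
      (LINT t:{0<..}|lborel. exp (- lam * sqrt (2 * t)) * (t powr (q - 1) * exp (- t) / Gamma q))"
    if "q > 0"
    unfolding set_integral_gamma_density_exp_sqrt
    using P1_moment_eq_std_normal_ratio_moment(2)[OF assms] std_normal_ratio_moment_eq_gamma_exp_sqrt[OF assms(1) that]
    by simp
qed

end
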